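(* Let $\tilde G$ be the infinite heavy-hexagonal graph and let $G$ be a finite subgraph of $\tilde G$. Let $L(G)$ be the interference graph of $G$. If $G$ contains two connected unit cells as a subgraph, then the chromatic number of $L(G)$ equals $6$, i.e. $\chi(L(G))=6$.
   Context: The infinite heavy-hexagonal graph $\tilde G$ is obtained from the infinite hexagonal (honeycomb) lattice by inserting one additional vertex into every edge (subdividing each edge once). A unit cell is the 12-vertex cycle of $\tilde G$ arising from a single hexagonal face of the honeycomb lattice; two unit cells are connected if their hexagons are adjacent (share a side). For a graph $G=(V,E)$ and an edge $e=\{i,j\}\in E$, let $N(e)=(N(i)\setminus\{j\})\cup(N(j)\setminus\{i\})$ be its neighborhood, where $N(v)$ is the set of neighbors of vertex $v$. The interference graph $L(G)$ has one vertex for each edge of $G$, and two distinct edges $e,f$ of $G$ are adjacent in $L(G)$ if they interfere, i.e. if $(e\cup N(e))\cap(f\cup N(f))\neq\emptyset$ (the qubits used by a parallel experiment on $e$, namely its endpoints and its neighboring qubits, overlap with those used for $f$). The chromatic number $\chi$ is the minimum number of colors in a proper vertex coloring. *)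

theory Defs
  imports Main
begin

text \<open>The honeycomb lattice is realised as the brick-wall lattice on \<open>\<int>\<^sup>2\<close>:
  vertex (x,y), horizontal edges (x,y)--(x+1,y), vertical edges (x,y)--(x,y+1) when x+y is even.
  Coordinates are doubled, so honeycomb vertex (x,y) is the point (2x,2y) and the subdivision
  vertex of an edge is its midpoint.\<close>

type_synonym hvert = "int \<times> int"

definition hh_vert :: "hvert \<Rightarrow> bool" where
  "hh_vert p \<longleftrightarrow> even (snd p) \<or>
     (even (fst p) \<and> odd (snd p) \<and> even (fst p div 2 + snd p div 2))"

definition unit_dist :: "hvert \<Rightarrow> hvert \<Rightarrow> bool" where
  "unit_dist u v \<longleftrightarrow> \<bar>fst u - fst v\<bar> + \<bar>snd u - snd v\<bar> = 1"

definition hh_edges :: "hvert set set" where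
  "hh_edges = {{u, v} | u v. hh_vert u \<and> hh_vert v \<and> unit_dist u v}"

text \<open>Unit cells: the hexagonal face of the brick wall with lower-left corner (x,y), x+y even,
  has honeycomb corners (x,y),(x+1,y),(x+2,y),(x+2,y+1),(x+1,y+1),(x,y+1).\<close>

definition valid_cell :: "int \<times> int \<Rightarrow> bool" where
  "valid_cell c \<longleftrightarrow> even (fst c + snd c)"

definition cell_cycle :: "int \<times> int \<Rightarrow> hvert list" where
  "cell_cycle c = (let a = 2 * fst c; b = 2 * snd c in
     [(a,b), (a+1,b), (a+2,b), (a+3,b), (a+4,b), (a+4,b+1),
      (a+4,b+2), (a+3,b+2), (a+2,b+2), (a+1,b+2), (a,b+2), (a,b+1)])"

definition cell_verts :: "int \<times> int \<Rightarrow> hvert set" where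
  "cell_verts c = set (cell_cycle c)"

definition cell_edges :: "int \<times> int \<Rightarrow> hvert set set" where
  "cell_edges c = {{cell_cycle c ! i, cell_cycle c ! ((i + 1) mod 12)} | i. i < 12}"

text \<open>Two unit cells are connected iff their hexagons share a side, i.e. the subdivided
  side gives common edges of the heavy-hex cycles.\<close>

definition cells_connected :: "int \<times> int \<Rightarrow> int \<times> int \<Rightarrow> bool" where
  "cells_connected c d \<longleftrightarrow> c \<noteq> d \<and> cell_edges c \<inter> cell_edges d \<noteq> {}"

definition finite_hh_subgraph :: "hvert set \<Rightarrow> hvert set set \<Rightarrow> bool" where
  "finite_hh_subgraph V E \<longleftrightarrow> finite V \<and> (\<forall>v\<in>V. hh_vert v) \<and> E \<subseteq> hh_edges \<and>
     (\<forall>e\<in>E. e \<subseteq> V)"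

definition contains_two_connected_cells :: "hvert set \<Rightarrow> hvert set set \<Rightarrow> bool" where
  "contains_two_connected_cells V E \<longleftrightarrow>
     (\<exists>c d. valid_cell c \<and> valid_cell d \<and> cells_connected c d \<and>
        cell_verts c \<union> cell_verts d \<subseteq> V \<and> cell_edges c \<union> cell_edges d \<subseteq> E)"

definition nbr :: "'a set set \<Rightarrow> 'a \<Rightarrow> 'a set" where
  "nbr E v = {u. {u, v} \<in> E}"

definition edge_nbhd :: "'a set set \<Rightarrow> 'a \<Rightarrow> 'a \<Rightarrow> 'a set" where
  "edge_nbhd E i j = (nbr E i - {j}) \<union> (nbr E j - {i})"

definition interfere :: "'a set set \<Rightarrow> 'a set \<Rightarrow> 'a set \<Rightarrow> bool" where
  "interfere E e f \<longleftrightarrow> e \<noteq> f \<and>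
     (\<exists>i j k l. e = {i, j} \<and> f = {k, l} \<and>
        ({i, j} \<union> edge_nbhd E i j) \<inter> ({k, l} \<union> edge_nbhd E k l) \<noteq> {})"

definition colorable :: "'b set \<Rightarrow> ('b \<Rightarrow> 'b \<Rightarrow> bool) \<Rightarrow> nat \<Rightarrow> bool" where
  "colorable W adj k \<longleftrightarrow> (\<exists>col :: 'b \<Rightarrow> nat. (\<forall>w\<in>W. col w < k) \<and>
     (\<forall>u\<in>W. \<forall>w\<in>W. adj u w \<longrightarrow> col u \<noteq> col w))"

definition chromatic_number :: "'b set \<Rightarrow> ('b \<Rightarrow> 'b \<Rightarrow> bool) \<Rightarrow> nat" where
  "chromatic_number W adj = (LEAST k. colorable W adj k)"

end

(* Every heavy-hex edge joins a honeycomb vertex (2X, 2Y) to the subdivision vertex of one of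
   the three honeycomb edges at (X, Y), and subdivision vertices have degree 2; hence every vertex
   in e \<union> N(e) lies within distance 1 of (2X, 2Y) or is the far honeycomb end (2X + 2a, 2Y + 2b).
   Colouring e by its honeycomb direction (left, right, vertical) and the parity of X + Y is
   therefore proper on L(G): two edges of the same colour sharing such a vertex have the same
   honeycomb end.  Conversely, two adjacent unit cells contain a honeycomb vertex w with all three
   of its edges and the next edge in each direction; w lies in e \<union> N(e) for all six of them, so
   they form a 6-clique in L(G). *)

theory Submission
  imports Defs
begin

definition edge_closure :: "'a set set \<Rightarrow> 'a set \<Rightarrow> 'a set" where
  "edge_closure E e = {w. \<exists>i j. e = {i, j} \<and> w \<in> {i, j} \<union> edge_nbhd E i j}"

lemma interfere_iff:
  "interfere E e f \<longleftrightarrow> e \<noteq> f \<and> edge_closure E e \<inter> edge_closure E f \<noteq> {}"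
  unfolding interfere_def edge_closure_def by blast

lemma endpoint_in_edge_closure: "w \<in> edge_closure E {w, y}"
  unfolding edge_closure_def by blast

lemma neighbour_in_edge_closure:
  assumes "{w, y} \<in> E" "x \<noteq> w"
  shows "w \<in> edge_closure E {x, y}"
proof -
  have "w \<in> edge_nbhd E x y"
    using assms unfolding edge_nbhd_def nbr_def by auto
  then show ?thesis
    unfolding edge_closure_def by blast
qed

lemma colorable_mono: "colorable W adj k \<Longrightarrow> k \<le> m \<Longrightarrow> colorable W adj m"
  unfolding colorable_def by (meson less_le_trans)

lemma clique_card_le_colors:
  assumes "colorable W adj k" "S \<subseteq> W" "\<And>u w. u \<in> S \<Longrightarrow> w \<in> S \<Longrightarrow> u \<noteq> w \<Longrightarrow> adj u w"
  shows "card S \<le> k"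
proof -
  obtain col where col_lt: "\<forall>w\<in>W. col w < k"
    and proper: "\<forall>u\<in>W. \<forall>w\<in>W. adj u w \<longrightarrow> col u \<noteq> col w"
    using assms(1) unfolding colorable_def by blast
  have "inj_on col S"
  proof (rule inj_onI, rule ccontr)
    fix u w
    assume "u \<in> S" "w \<in> S" "col u = col w" "u \<noteq> w"
    then show False
      using assms(2,3) proper by blast
  qed
  moreover have "col ` S \<subseteq> {..<k}"
    using assms(2) col_lt by auto
  ultimately show ?thesis
    using card_inj_on_le[of col S "{..<k}"] by simp
qed

lemma card_le_colors_of_common_vertex:
  assumes "colorable E (interfere E) k" "S \<subseteq> E" "\<And>e. e \<in> S \<Longrightarrow> w \<in> edge_closure E e"
  shows "card S \<le> k"
proof (rule clique_card_le_colors[OF assms(1,2)])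
  fix u v
  assume "u \<in> S" "v \<in> S" "u \<noteq> v"
  then show "interfere E u v"
    using assms(3) unfolding interfere_iff by blast
qed

lemma chromatic_number_eqI:
  assumes "colorable W adj k" "\<not> colorable W adj (k - 1)" "k > 0"
  shows "chromatic_number W adj = k"
  unfolding chromatic_number_def
proof (rule Least_equality)
  show "colorable W adj k" by fact
  show "k \<le> m" if "colorable W adj m" for m
    using that assms(2,3) colorable_mono[of W adj m "k - 1"] by linarith
qed

(* (2X + a, 2Y + b) is the subdivision vertex of the honeycomb edge leaving (X, Y) in direction (a, b). *)
definition brick_dir :: "int \<Rightarrow> int \<Rightarrow> int \<Rightarrow> int \<Rightarrow> bool" where
  "brick_dir X Y a b \<longleftrightarrow>
     (a = 1 \<and> b = 0) \<or> (a = -1 \<and> b = 0) \<or> (a = 0 \<and> b = (if even (X + Y) then 1 else -1))"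

lemma brick_dir_unit: "brick_dir X Y a b \<Longrightarrow> \<bar>a\<bar> + \<bar>b\<bar> = 1"
  unfolding brick_dir_def by auto

lemma unit_dist_commute: "unit_dist u v \<longleftrightarrow> unit_dist v u"
  by (simp add: unit_dist_def abs_minus_commute)

lemma hh_edge_has_honeycomb_end:
  assumes "hh_vert u" "hh_vert v" "unit_dist u v"
  shows "(even (fst u) \<and> even (snd u)) \<or> (even (fst v) \<and> even (snd v))"
  using assms unfolding hh_vert_def unit_dist_def by presburger

lemma hh_neighbour_of_honeycomb:
  assumes "hh_vert v" "unit_dist (2 * X, 2 * Y) v"
  shows "\<exists>a b. brick_dir X Y a b \<and> v = (2 * X + a, 2 * Y + b)"
proof -
  obtain a b where v: "v = (2 * X + a, 2 * Y + b)"
    by (intro that[of "fst v - 2 * X" "snd v - 2 * Y"]) simp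
  have "(a = 1 \<or> a = -1) \<and> b = 0 \<or> a = 0 \<and> (b = 1 \<or> b = -1)"
    using assms(2) v unfolding unit_dist_def by simp arith
  moreover have "even (2 * Y + b) \<or> odd (2 * Y + b) \<and> even ((2 * X + a) div 2 + (2 * Y + b) div 2)"
    using assms(1) v unfolding hh_vert_def by auto
  ultimately have "brick_dir X Y a b"
    unfolding brick_dir_def by (elim disjE conjE) (simp_all, presburger+)
  then show ?thesis
    using v by blast
qed

lemma hh_edges_form:
  assumes "e \<in> hh_edges"
  shows "\<exists>X Y a b. brick_dir X Y a b \<and> e = {(2 * X, 2 * Y), (2 * X + a, 2 * Y + b)}"
proof -
  obtain u v where e: "e = {u, v}" and uv: "hh_vert u" "hh_vert v" "unit_dist u v"
    using assms unfolding hh_edges_def by blast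
  have honeycomb_end: "\<exists>X Y a b. brick_dir X Y a b \<and> {p, q} = {(2 * X, 2 * Y), (2 * X + a, 2 * Y + b)}"
    if q: "hh_vert q" "unit_dist p q" and p_even: "even (fst p)" "even (snd p)" for p q
  proof -
    obtain X Y where p: "p = (2 * X, 2 * Y)"
      using p_even by (metis evenE prod.collapse)
    then show ?thesis
      using hh_neighbour_of_honeycomb[of q X Y] q by blast
  qed
  from hh_edge_has_honeycomb_end[OF uv] show ?thesis
  proof
    assume "even (fst u) \<and> even (snd u)"
    then show ?thesis
      using honeycomb_end[of v u] uv e by blast
  next
    assume "even (fst v) \<and> even (snd v)"
    moreover have "e = {v, u}"
      using e by (simp add: insert_commute)
    ultimately show ?thesis
      using honeycomb_end[of u v] uv unit_dist_commute by blast
  qed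
qed

lemma hh_edgesD: "{z, t} \<in> hh_edges \<Longrightarrow> hh_vert z \<and> unit_dist z t"
  unfolding hh_edges_def by (auto simp: doubleton_eq_iff unit_dist_commute)

lemma hh_neighbour_of_subdivision:
  assumes "\<bar>a\<bar> + \<bar>b\<bar> = 1" "hh_vert z" "unit_dist z (2 * X + a, 2 * Y + b)"
  shows "z = (2 * X, 2 * Y) \<or> z = (2 * X + 2 * a, 2 * Y + 2 * b)"
proof -
  obtain zx zy where z: "z = (zx, zy)"
    by fastforce
  have "(a = 1 \<or> a = -1) \<and> b = 0 \<or> a = 0 \<and> (b = 1 \<or> b = -1)"
    using assms(1) by arith
  moreover have "even zy \<or> even zx \<and> odd zy"
    using assms(2) z unfolding hh_vert_def by auto
  moreover have "\<bar>zx - (2 * X + a)\<bar> + \<bar>zy - (2 * Y + b)\<bar> = 1"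
    using assms(3) z unfolding unit_dist_def by simp
  ultimately show ?thesis
    using z by (elim disjE conjE) (simp_all, presburger+)
qed

definition edge_zone :: "int \<Rightarrow> int \<Rightarrow> int \<Rightarrow> int \<Rightarrow> hvert set" where
  "edge_zone X Y a b =
     insert (2 * X + 2 * a, 2 * Y + 2 * b) {z. \<bar>fst z - 2 * X\<bar> + \<bar>snd z - 2 * Y\<bar> \<le> 1}"

lemma edge_closure_subset_edge_zone:
  assumes "E \<subseteq> hh_edges" "\<bar>a\<bar> + \<bar>b\<bar> = 1"
  shows "edge_closure E {(2 * X, 2 * Y), (2 * X + a, 2 * Y + b)} \<subseteq> edge_zone X Y a b"
proof
  fix z
  assume "z \<in> edge_closure E {(2 * X, 2 * Y), (2 * X + a, 2 * Y + b)}"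
  then consider "z = (2 * X, 2 * Y)" | "z = (2 * X + a, 2 * Y + b)"
    | "{z, (2 * X, 2 * Y)} \<in> E" | "{z, (2 * X + a, 2 * Y + b)} \<in> E"
    unfolding edge_closure_def edge_nbhd_def nbr_def by (auto simp: doubleton_eq_iff)
  then show "z \<in> edge_zone X Y a b"
  proof cases
    case 3
    then have "unit_dist z (2 * X, 2 * Y)"
      using assms(1) hh_edgesD by blast
    then show ?thesis
      unfolding edge_zone_def unit_dist_def by simp
  next
    case 4
    then have "hh_vert z" "unit_dist z (2 * X + a, 2 * Y + b)"
      using assms(1) hh_edgesD by blast+
    then have "z = (2 * X, 2 * Y) \<or> z = (2 * X + 2 * a, 2 * Y + 2 * b)"
      by (rule hh_neighbour_of_subdivision[OF assms(2)])
    then show ?thesis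
      unfolding edge_zone_def by auto
  qed (use assms(2) in \<open>auto simp: edge_zone_def\<close>)
qed

lemma edge_zones_disjoint:
  assumes "even (X + Y) \<longleftrightarrow> even (X' + Y')" "\<bar>a\<bar> + \<bar>b\<bar> = 1" "(X, Y) \<noteq> (X', Y')"
  shows "edge_zone X Y a b \<inter> edge_zone X' Y' a b = {}"
proof (rule equals0I)
  have near_near: "X = X' \<and> Y = Y'"
    if "\<bar>p - 2 * X\<bar> + \<bar>q - 2 * Y\<bar> \<le> 1" "\<bar>p - 2 * X'\<bar> + \<bar>q - 2 * Y'\<bar> \<le> 1" for p q
  proof -
    have "\<bar>X - X'\<bar> + \<bar>Y - Y'\<bar> \<le> 1"
      using that by arith
    then show ?thesis
      using assms(1) by presburger
  qed
  have far_near: False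
    if "even (U + V) \<longleftrightarrow> even (U' + V')"
      "\<bar>2 * U + 2 * a - 2 * U'\<bar> + \<bar>2 * V + 2 * b - 2 * V'\<bar> \<le> 1" for U V U' V'
  proof -
    have "U' = U + a" "V' = V + b"
      using that(2) by arith+
    then show False
      using that(1) assms(2) by presburger
  qed
  fix z
  assume "z \<in> edge_zone X Y a b \<inter> edge_zone X' Y' a b"
  then show False
    using near_near far_near[OF assms(1)] far_near[OF assms(1)[symmetric]] assms(3)
    unfolding edge_zone_def by auto
qed

(* For e = {(2X, 2Y), (2X + a, 2Y + b)} the coordinate sums are 4X + a and 4Y + b with
   a, b \<in> {-1, 0, 1}, so s mod 4 = a + 1, s div 4 = X and t div 4 = Y. *)
definition hh_color :: "hvert set \<Rightarrow> nat" where
  "hh_color e = (let s = (\<Sum>p\<in>e. fst p) + 1; t = (\<Sum>p\<in>e. snd p) + 1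
     in nat (2 * (s mod 4) + (s div 4 + t div 4) mod 2))"

lemma hh_color_edge:
  assumes "brick_dir X Y a b"
  shows "hh_color {(2 * X, 2 * Y), (2 * X + a, 2 * Y + b)} = nat (2 * (a + 1) + (X + Y) mod 2)"
proof -
  have "(2 * X, 2 * Y) \<noteq> (2 * X + a, 2 * Y + b)"
    using brick_dir_unit[OF assms] by auto
  then have "hh_color {(2 * X, 2 * Y), (2 * X + a, 2 * Y + b)}
      = nat (2 * ((4 * X + a + 1) mod 4) + ((4 * X + a + 1) div 4 + (4 * Y + b + 1) div 4) mod 2)"
    unfolding hh_color_def by (simp add: Let_def algebra_simps)
  also have "\<dots> = nat (2 * (a + 1) + (X + Y) mod 2)"
  proof -
    have "\<bar>a\<bar> \<le> 1" "\<bar>b\<bar> \<le> 1"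
      using brick_dir_unit[OF assms] by arith+
    then have "(4 * X + a + 1) mod 4 = a + 1" "(4 * X + a + 1) div 4 = X" "(4 * Y + b + 1) div 4 = Y"
      by presburger+
    then show ?thesis
      by simp
  qed
  finally show ?thesis .
qed

lemma hh_color_eq_brick_dir:
  assumes "brick_dir X Y a b" "brick_dir X' Y' a' b'"
    and "hh_color {(2 * X, 2 * Y), (2 * X + a, 2 * Y + b)}
       = hh_color {(2 * X', 2 * Y'), (2 * X' + a', 2 * Y' + b')}"
  shows "a = a'" "b = b'" "even (X + Y) \<longleftrightarrow> even (X' + Y')"
proof -
  have "a \<ge> -1" "a' \<ge> -1"
    using assms(1,2) unfolding brick_dir_def by auto
  then have "2 * (a + 1) + (X + Y) mod 2 = 2 * (a' + 1) + (X' + Y') mod 2"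
    using assms(3) unfolding hh_color_edge[OF assms(1)] hh_color_edge[OF assms(2)]
    by (simp add: nat_eq_iff2 pos_mod_sign)
  then show "a = a'" and parity: "even (X + Y) \<longleftrightarrow> even (X' + Y')"
    by presburger+
  then show "b = b'"
    using assms(1,2) unfolding brick_dir_def by auto
qed

lemma hh_interference_colorable_6:
  assumes "E \<subseteq> hh_edges"
  shows "colorable E (interfere E) 6"
  unfolding colorable_def
proof (intro exI[of _ hh_color] conjI ballI impI)
  fix e
  assume "e \<in> E"
  then obtain X Y a b where "brick_dir X Y a b" "e = {(2 * X, 2 * Y), (2 * X + a, 2 * Y + b)}"
    using assms hh_edges_form by blast
  then show "hh_color e < 6"
    using hh_color_edge unfolding brick_dir_def by auto
next
  fix e f
  assume "e \<in> E" "f \<in> E" and "interfere E e f"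
  then have "e \<noteq> f" and common: "edge_closure E e \<inter> edge_closure E f \<noteq> {}"
    unfolding interfere_iff by blast+
  obtain X Y a b where dir: "brick_dir X Y a b" and e: "e = {(2 * X, 2 * Y), (2 * X + a, 2 * Y + b)}"
    using assms hh_edges_form \<open>e \<in> E\<close> by blast
  obtain X' Y' a' b' where dir': "brick_dir X' Y' a' b'"
    and f: "f = {(2 * X', 2 * Y'), (2 * X' + a', 2 * Y' + b')}"
    using assms hh_edges_form \<open>f \<in> E\<close> by blast
  show "hh_color e \<noteq> hh_color f"
  proof
    assume "hh_color e = hh_color f"
    then have same: "a' = a" "b' = b" "even (X + Y) \<longleftrightarrow> even (X' + Y')"
      using hh_color_eq_brick_dir[OF dir dir'] e f by auto
    then have "(X, Y) \<noteq> (X', Y')"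
      using \<open>e \<noteq> f\<close> e f by auto
    then have "edge_zone X Y a b \<inter> edge_zone X' Y' a b = {}"
      using edge_zones_disjoint[OF same(3) brick_dir_unit[OF dir]] by blast
    moreover have "edge_closure E e \<subseteq> edge_zone X Y a b" "edge_closure E f \<subseteq> edge_zone X' Y' a b"
      using edge_closure_subset_edge_zone[OF assms brick_dir_unit[OF dir]] e f same by auto
    ultimately show False
      using common by blast
  qed
qed

lemma cell_cycle_bounds:
  assumes "v \<in> set (cell_cycle c)"
  shows "2 * fst c \<le> fst v \<and> fst v \<le> 2 * fst c + 4 \<and> 2 * snd c \<le> snd v \<and> snd v \<le> 2 * snd c + 2"
  using assms unfolding cell_cycle_def Let_def by auto

lemma cell_edges_subset_cycle:
  assumes "e \<in> cell_edges c"
  shows "e \<subseteq> set (cell_cycle c)"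
proof -
  have "length (cell_cycle c) = 12"
    by (simp add: cell_cycle_def Let_def)
  then show ?thesis
    using assms unfolding cell_edges_def by (auto intro: nth_mem)
qed

lemma connected_cells_offset:
  assumes "valid_cell c" "valid_cell d" "cells_connected c d"
  shows "d = (fst c + 2, snd c) \<or> d = (fst c - 2, snd c) \<or> d = (fst c + 1, snd c + 1)
    \<or> d = (fst c - 1, snd c + 1) \<or> d = (fst c + 1, snd c - 1) \<or> d = (fst c - 1, snd c - 1)"
proof -
  obtain e where "e \<in> cell_edges c" "e \<in> cell_edges d"
    using assms(3) unfolding cells_connected_def by blast
  moreover have "e \<noteq> {}"
    using \<open>e \<in> cell_edges c\<close> unfolding cell_edges_def by auto
  ultimately obtain v where "v \<in> set (cell_cycle c)" "v \<in> set (cell_cycle d)"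
    using cell_edges_subset_cycle by blast
  then have "\<bar>fst d - fst c\<bar> \<le> 2" "\<bar>snd d - snd c\<bar> \<le> 1"
    using cell_cycle_bounds[of v c] cell_cycle_bounds[of v d] by linarith+
  moreover have "c \<noteq> d"
    using assms(3) unfolding cells_connected_def by blast
  moreover obtain x y x' y' where "c = (x, y)" "d = (x', y')"
    by fastforce
  ultimately show ?thesis
    using assms(1,2) unfolding valid_cell_def by simp presburger
qed

definition hex_cycle_edges :: "int \<Rightarrow> int \<Rightarrow> hvert set set" where
  "hex_cycle_edges a b = {{(a,b),(a+1,b)}, {(a+1,b),(a+2,b)}, {(a+2,b),(a+3,b)}, {(a+3,b),(a+4,b)},
    {(a+4,b),(a+4,b+1)}, {(a+4,b+1),(a+4,b+2)}, {(a+4,b+2),(a+3,b+2)}, {(a+3,b+2),(a+2,b+2)},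
    {(a+2,b+2),(a+1,b+2)}, {(a+1,b+2),(a,b+2)}, {(a,b+2),(a,b+1)}, {(a,b+1),(a,b)}}"

lemma cell_edges_eq_hex_cycle_edges: "cell_edges c = hex_cycle_edges (2 * fst c) (2 * snd c)"
proof -
  have "{i. i < (12::nat)} = {0, 1, 2, 3, 4, 5, 6, 7, 8, 9, 10, 11}"
    by (auto simp: numeral_eq_Suc less_Suc_eq)
  moreover have "cell_edges c = (\<lambda>i. {cell_cycle c ! i, cell_cycle c ! ((i + 1) mod 12)}) ` {i. i < 12}"
    unfolding cell_edges_def by blast
  ultimately show ?thesis
    by (simp add: cell_cycle_def Let_def hex_cycle_edges_def)
qed

(* The three edges at the honeycomb vertex (p, q), each followed by the next edge in the same
   direction; s = 1 or s = -1 selects the vertical direction. *)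
definition hh_star :: "int \<Rightarrow> int \<Rightarrow> int \<Rightarrow> hvert set set" where
  "hh_star p q s = {{(p,q),(p+1,q)}, {(p+2,q),(p+1,q)}, {(p,q),(p-1,q)}, {(p-2,q),(p-1,q)},
     {(p,q),(p,q+s)}, {(p,q+2*s),(p,q+s)}}"

lemma card_hh_star: "s \<noteq> 0 \<Longrightarrow> card (hh_star p q s) = 6"
  by (simp add: hh_star_def doubleton_eq_iff)

lemma hh_star_not_5_colorable:
  assumes "s \<noteq> 0" "hh_star p q s \<subseteq> E"
  shows "\<not> colorable E (interfere E) 5"
proof
  assume colorable: "colorable E (interfere E) 5"
  have "{(p, q), (p + 1, q)} \<in> E" "{(p, q), (p - 1, q)} \<in> E" "{(p, q), (p, q + s)} \<in> E"
    using assms(2) unfolding hh_star_def by simp_all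
  then have "(p, q) \<in> edge_closure E e" if "e \<in> hh_star p q s" for e
    using that assms(1) unfolding hh_star_def
    by (elim insertE emptyE) (simp_all add: endpoint_in_edge_closure neighbour_in_edge_closure)
  then have "card (hh_star p q s) \<le> 5"
    by (rule card_le_colors_of_common_vertex[OF colorable assms(2)])
  then show False
    using card_hh_star[OF assms(1)] by simp
qed

lemma hh_star_in_adjacent_cells:
  "hh_star (2 * x + 4) (2 * y + 2) (-1) \<subseteq> cell_edges (x, y) \<union> cell_edges (x + 2, y)"
  "hh_star (2 * x) (2 * y + 2) (-1) \<subseteq> cell_edges (x, y) \<union> cell_edges (x - 2, y)"
  "hh_star (2 * x + 2) (2 * y + 2) 1 \<subseteq> cell_edges (x, y) \<union> cell_edges (x + 1, y + 1)"
  "hh_star (2 * x) (2 * y + 2) (-1) \<subseteq> cell_edges (x, y) \<union> cell_edges (x - 1, y + 1)"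
  "hh_star (2 * x + 2) (2 * y) (-1) \<subseteq> cell_edges (x, y) \<union> cell_edges (x + 1, y - 1)"
  "hh_star (2 * x) (2 * y) 1 \<subseteq> cell_edges (x, y) \<union> cell_edges (x - 1, y - 1)"
  unfolding cell_edges_eq_hex_cycle_edges hh_star_def hex_cycle_edges_def
  by (simp_all add: doubleton_eq_iff algebra_simps)

lemma connected_cells_contain_hh_star:
  assumes "valid_cell c" "valid_cell d" "cells_connected c d"
  shows "\<exists>p q s. s \<noteq> 0 \<and> hh_star p q s \<subseteq> cell_edges c \<union> cell_edges d"
proof -
  obtain x y where c: "c = (x, y)"
    by fastforce
  have "(1::int) \<noteq> 0" "(-1::int) \<noteq> 0"
    by simp_all
  then show ?thesis
    using connected_cells_offset[OF assms] hh_star_in_adjacent_cells[of x y]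
    unfolding c fst_conv snd_conv by blast
qed

theorem lemma1:
  fixes V :: "hvert set" and E :: "hvert set set"
  assumes "finite_hh_subgraph V E"
    and "contains_two_connected_cells V E"
  shows "chromatic_number E (interfere E) = 6"
proof -
  have "E \<subseteq> hh_edges"
    using assms(1) unfolding finite_hh_subgraph_def by blast
  then have upper: "colorable E (interfere E) 6"
    by (rule hh_interference_colorable_6)
  obtain c d where "valid_cell c" "valid_cell d" "cells_connected c d"
    and "cell_edges c \<union> cell_edges d \<subseteq> E"
    using assms(2) unfolding contains_two_connected_cells_def by blast
  then obtain p q s where "s \<noteq> 0" "hh_star p q s \<subseteq> E"
    using connected_cells_contain_hh_star by (metis subset_trans)
  then have lower: "\<not> colorable E (interfere E) 5"
    by (rule hh_star_not_5_colorable)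
  show ?thesis
    using chromatic_number_eqI[OF upper] lower by simp
qed

end
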